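(* For every $n>0$, there are finite alphabets $\Sigma_I,\Sigma_O$ and a language $L_n'\subseteq(\Sigma_I\times\Sigma_O)^\omega$ recognized by a finitary Büchi automaton with costs $\mathcal{A}_n'$ with $O(n)$ states such that: Player $O$ wins $\Gamma_f(L_n')$ for every delay function $f$; an optimal winning strategy for Player $O$ in $\Gamma_{f_{2^n}}(L_n')$ has cost $0$; and for every $k<2^n$, an optimal winning strategy for Player $O$ in $\Gamma_{f_k}(L_n')$ has cost $n$.
   Context: A parity automaton with costs is a tuple $\mathcal{A}=(Q,\Sigma,q_I,\delta,\Omega,\mathrm{Cst})$ with a finite set $Q$ of states, a finite alphabet $\Sigma$, an initial state $q_I$, a deterministic complete transition function $\delta\colon Q\times\Sigma\to Q$, a coloring $\Omega\colon Q\to\mathbb{N}$, and a cost function $\mathrm{Cst}$ assigning to every transition $(q,a,\delta(q,a))$ either $\epsilon$ or $\mathtt{i}$ (increment-transition). A finitary Büchi automaton is one in which every transition is an increment-transition and $\Omega(Q)=\{1,2\}$. The run on $a_0a_1\cdots$ is $(q_0,a_0,q_1)(q_1,a_1,q_2)\cdots$ with $q_0=q_I$, $q_{j+1}=\delta(q_j,a_j)$; the cost of a finite run is its number of increment-transitions. For odd $c$, $\mathrm{Ans}(c)=\{c'\in\Omega(Q)\mid c'>c,\ c'\text{ even}\}$. For an infinite run $\rho$ and $n$, $\mathrm{Cor}(\rho,n)=0$ if $\Omega(q_n)$ is even, and otherwise it is the minimal cost of $(q_n,a_n,q_{n+1})\cdots(q_{n'-1},a_{n'-1},q_{n'})$ over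 $n'>n$ with $\Omega(q_{n'})\in\mathrm{Ans}(\Omega(q_n))$ ($\min\emptyset=\infty$). The run is accepting if $\limsup_n\mathrm{Cor}(\rho,n)<\infty$; $L(\mathcal{A})$ is the set of infinite words whose run is accepting. A delay function is a map $f\colon\mathbb{N}\to\mathbb{N}\setminus\{0\}$; for $k\ge0$, $f_k$ denotes the delay function with $f_k(0)=k+1$ and $f_k(i)=1$ for $i>0$. For $L\subseteq(\Sigma_I\times\Sigma_O)^\omega$, the delay game $\Gamma_f(L)$ is played in rounds $i=0,1,2,\ldots$: in round $i$, Player $I$ picks $u_i\in\Sigma_I^{f(i)}$, then Player $O$ picks $v_i\in\Sigma_O$. Player $O$ wins the play if the outcome, i.e., the word over $\Sigma_I\times\Sigma_O$ pairing $u_0u_1u_2\cdots$ and $v_0v_1v_2\cdots$ letterwise, is in $L$. A strategy for Player $O$ is a map $\tau_O\colon\Sigma_I^*\to\Sigma_O$; a play is consistent with $\tau_O$ if $v_i=\tau_O(u_0\cdots u_i)$ for all $i$; $\tau_O$ is winning if every consistent play is won by Player $O$, and Player $O$ wins the game if she has a winning strategy. For a winning strategy $\tau_O$ in $\Gamma_f(L(\mathcal{A}))$, its cost is $\mathrm{Cst}_\mathcal{A}(\tau_O)=\sup_w\limsup_{n\to\infty}\mathrm{Cor}(\rho(w),n)$, where $w$ ranges over outcomes of plays consistent with $\tau_O$ and $\rho(w)$ is the run of $\mathcal{A}$ on $w$; a winning strategy is optimal if its cost is minimal among all winning strategies of Player $O$ in $\Gamma_f(L(\mathcal{A}))$. 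*)

theory Defs
  imports Main "HOL-Library.Extended_Nat" "HOL-Library.Liminf_Limsup"
begin

text \<open>The automaton is deterministic and
complete on its state set and alphabet; incr q a holds iff the transition
(q, a, trans q a) is an increment-transition (cost i), otherwise it has cost epsilon.\<close>

record ('q, 'a) pac =
  states :: "'q set"
  alph   :: "'a set"
  init   :: 'q
  trans  :: "'q \<Rightarrow> 'a \<Rightarrow> 'q"
  col    :: "'q \<Rightarrow> nat"
  incr   :: "'q \<Rightarrow> 'a \<Rightarrow> bool"

definition wf_pac :: "('q, 'a) pac \<Rightarrow> bool" where
  "wf_pac A \<longleftrightarrow> finite (states A) \<and> finite (alph A) \<and> init A \<in> states A \<and>
     (\<forall>q\<in>states A. \<forall>a\<in>alph A. trans A q a \<in> states A)"

definition finitary_buechi :: "('q, 'a) pac \<Rightarrow> bool" where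
  "finitary_buechi A \<longleftrightarrow> wf_pac A \<and>
     (\<forall>q\<in>states A. \<forall>a\<in>alph A. incr A q a) \<and> col A ` states A = {1, 2}"

primrec run :: "('q, 'a) pac \<Rightarrow> (nat \<Rightarrow> 'a) \<Rightarrow> nat \<Rightarrow> 'q" where
  "run A w 0 = init A"
| "run A w (Suc j) = trans A (run A w j) (w j)"

definition seg_cost :: "('q, 'a) pac \<Rightarrow> (nat \<Rightarrow> 'a) \<Rightarrow> nat \<Rightarrow> nat \<Rightarrow> nat" where
  "seg_cost A w n n' = card {j. n \<le> j \<and> j < n' \<and> incr A (run A w j) (w j)}"

definition Ans :: "('q, 'a) pac \<Rightarrow> nat \<Rightarrow> nat set" where
  "Ans A c = {c' \<in> col A ` states A. c' > c \<and> even c'}"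

text \<open>Cor(rho, n); the infimum of the empty set of enat is infinity.\<close>
definition Cor :: "('q, 'a) pac \<Rightarrow> (nat \<Rightarrow> 'a) \<Rightarrow> nat \<Rightarrow> enat" where
  "Cor A w n =
     (if even (col A (run A w n)) then 0
      else (INF n' \<in> {n'. n' > n \<and> col A (run A w n') \<in> Ans A (col A (run A w n))}.
              enat (seg_cost A w n n')))"

definition lang :: "('q, 'a) pac \<Rightarrow> (nat \<Rightarrow> 'a) set" where
  "lang A = {w. (\<forall>i. w i \<in> alph A) \<and> limsup (Cor A w) < \<infinity>}"

definition delay_fun :: "(nat \<Rightarrow> nat) \<Rightarrow> bool" where
  "delay_fun f \<longleftrightarrow> (\<forall>i. f i > 0)"

definition f_k :: "nat \<Rightarrow> nat \<Rightarrow> nat" where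
  "f_k k i = (if i = 0 then k + 1 else 1)"

text \<open>Number of input letters chosen by Player I up to and including round i.\<close>
definition pref_len :: "(nat \<Rightarrow> nat) \<Rightarrow> nat \<Rightarrow> nat" where
  "pref_len f i = (\<Sum>j\<le>i. f j)"

text \<open>Outcome of the play in which Player I's letters form the input word x and
Player O plays according to tau: v_i = tau(u_0 ... u_i).\<close>
definition outcome :: "(nat \<Rightarrow> nat) \<Rightarrow> ('i list \<Rightarrow> 'o) \<Rightarrow> (nat \<Rightarrow> 'i) \<Rightarrow> nat \<Rightarrow> 'i \<times> 'o" where
  "outcome f \<tau> x j = (x j, \<tau> (map x [0..<pref_len f j]))"

definition strategy :: "'i set \<Rightarrow> 'o set \<Rightarrow> ('i list \<Rightarrow> 'o) \<Rightarrow> bool" where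
  "strategy SI SO \<tau> \<longleftrightarrow> (\<forall>u \<in> lists SI. \<tau> u \<in> SO)"

definition winning :: "'i set \<Rightarrow> 'o set \<Rightarrow> (nat \<Rightarrow> nat) \<Rightarrow> (nat \<Rightarrow> 'i \<times> 'o) set
                         \<Rightarrow> ('i list \<Rightarrow> 'o) \<Rightarrow> bool" where
  "winning SI SO f L \<tau> \<longleftrightarrow> strategy SI SO \<tau> \<and>
     (\<forall>x. (\<forall>i. x i \<in> SI) \<longrightarrow> outcome f \<tau> x \<in> L)"

definition O_wins :: "'i set \<Rightarrow> 'o set \<Rightarrow> (nat \<Rightarrow> nat) \<Rightarrow> (nat \<Rightarrow> 'i \<times> 'o) set \<Rightarrow> bool" where
  "O_wins SI SO f L \<longleftrightarrow> (\<exists>\<tau>. winning SI SO f L \<tau>)"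

definition strat_cost :: "('q, 'i \<times> 'o) pac \<Rightarrow> 'i set \<Rightarrow> (nat \<Rightarrow> nat) \<Rightarrow> ('i list \<Rightarrow> 'o) \<Rightarrow> enat" where
  "strat_cost A SI f \<tau> = (SUP x \<in> {x. \<forall>i. x i \<in> SI}. limsup (Cor A (outcome f \<tau> x)))"

definition optimal :: "('q, 'i \<times> 'o) pac \<Rightarrow> 'i set \<Rightarrow> 'o set \<Rightarrow> (nat \<Rightarrow> nat)
                        \<Rightarrow> ('i list \<Rightarrow> 'o) \<Rightarrow> bool" where
  "optimal A SI SO f \<tau> \<longleftrightarrow> winning SI SO f (lang A) \<tau> \<and>
     (\<forall>\<tau>'. winning SI SO f (lang A) \<tau>' \<longrightarrow> strat_cost A SI f \<tau> \<le> strat_cost A SI f \<tau>')"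

end

theory Submission
  imports Defs
begin

text \<open>Player I writes a counter that starts at some value \<open>c \<le> 2^n\<close>, decreases by one per letter
and, on reaching 0, comes with a bit. When the countdown starts, Player O must commit to that bit; a
wrong guess sends the automaton through a chain of \<open>n\<close> odd-coloured states, so the request is
answered only after \<open>n\<close> increments, and this is the largest correction time the automaton allows.
To keep Player I honest, Player O also names one binary digit in each round, and a wrong decrement
in that digit moves the automaton to an accepting sink. With lookahead \<open>2^n + 1\<close> Player O sees the
bit before she has to guess it, as well as a differing digit of any wrong decrement, so no odd state
is ever visited. With lookahead \<open>k + 1 \<le> 2^n\<close> Player I counts down from \<open>2^n\<close> and then reveals
the complement of Player O's guess, so the penalty chain is entered again and again.\<close>

definition digit :: "nat \<Rightarrow> nat \<Rightarrow> nat" where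
  "digit i c = c div 2 ^ i mod 2"

lemma digit_less_2 [simp]: "digit i c < 2"
  by (simp add: digit_def)

lemma digit_div_2: "digit i (c div 2) = digit (Suc i) c"
  by (simp add: digit_def div_mult2_eq)

lemma eq_if_digits_eq:
  "a < 2 ^ Suc n \<Longrightarrow> b < 2 ^ Suc n \<Longrightarrow> (\<forall>i\<le>n. digit i a = digit i b) \<Longrightarrow> a = b"
proof (induction n arbitrary: a b)
  case 0
  then show ?case by (auto simp: digit_def)
next
  case (Suc n)
  have "a div 2 = b div 2"
    using Suc.IH[of "a div 2" "b div 2"] Suc.prems by (auto simp: digit_div_2)
  moreover have "a mod 2 = b mod 2"
    using Suc.prems(3) by (auto simp: digit_def)
  ultimately show ?case by (metis div_mult_mod_eq)
qed

lemma div_2_le_if_less: "a < 2 * K + 2 \<Longrightarrow> a div 2 \<le> (K::nat)"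
  by presburger

lemma one_minus_mod_2_neq: "1 - a mod 2 \<noteq> (a::nat) mod 2"
  by (simp add: mod2_eq_if)

lemma le_limsup_if_frequently:
  fixes X :: "nat \<Rightarrow> 'a::complete_linorder"
  assumes "\<exists>\<^sub>F n in sequentially. c \<le> X n"
  shows "c \<le> limsup X"
  unfolding limsup_INF_SUP
proof (rule INF_greatest)
  fix M :: nat
  obtain m where "M \<le> m" "c \<le> X m"
    using assms by (auto simp: frequently_sequentially)
  then show "c \<le> (SUP m\<in>{M..}. X m)" by (auto intro: SUP_upper2)
qed

lemma outcome_in_alphabet:
  assumes "strategy SI SO \<tau>" "\<forall>i. x i \<in> SI"
  shows "outcome f \<tau> x i \<in> SI \<times> SO"
proof -
  have "map x [0..<pref_len f i] \<in> lists SI" using assms(2) by auto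
  then show ?thesis using assms by (auto simp: outcome_def strategy_def)
qed

lemma pref_len_f_k: "pref_len (f_k k) j = k + 1 + j"
  by (induction j) (auto simp: pref_len_def f_k_def)

lemma outcome_f_k: "outcome (f_k k) \<tau> x j = (x j, \<tau> (map x [0..<k + 1 + j]))"
  by (simp add: outcome_def pref_len_f_k)

text \<open>An input letter \<open>2 c + b\<close> carries the counter value \<open>c \<le> 2^N\<close> and the bit \<open>b\<close>; an output
letter \<open>2 i + p\<close> names the digit \<open>i \<le> N\<close> to be checked and the guess \<open>p\<close>. State 0 waits for a
countdown, 1 is the sink, \<open>2, \<dots>, N + 1\<close> is the penalty chain, and \<open>reading N p i e\<close> remembers the
guess \<open>p\<close> and that digit \<open>i\<close> of the next counter value must be \<open>e\<close>.\<close>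

abbreviation Sigma_I :: "nat \<Rightarrow> nat set" where
  "Sigma_I N \<equiv> {..<2 ^ Suc N + 2}"

abbreviation Sigma_O :: "nat \<Rightarrow> nat set" where
  "Sigma_O N \<equiv> {..<2 * N + 2}"

definition reading :: "nat \<Rightarrow> nat \<Rightarrow> nat \<Rightarrow> nat \<Rightarrow> nat" where
  "reading N p i e = N + 2 + 4 * i + 2 * p + e"

definition advance :: "nat \<Rightarrow> nat \<Rightarrow> nat \<Rightarrow> nat \<Rightarrow> nat" where
  "advance N p a b =
     (if a div 2 = 0 then (if a mod 2 = p then 0 else 2)
      else reading N p (b div 2) (digit (b div 2) (a div 2 - 1)))"

definition delta :: "nat \<Rightarrow> nat \<Rightarrow> nat \<times> nat \<Rightarrow> nat" where
  "delta N q ab = (case ab of (a, b) \<Rightarrow>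
     if q = 0 then advance N (b mod 2) a b
     else if q = 1 then 1
     else if q \<le> N then q + 1
     else if q = N + 1 then 0
     else let r = q - (N + 2) in
       if digit (r div 4) (a div 2) \<noteq> r mod 2 then 1 else advance N (r div 2 mod 2) a b)"

definition colour :: "nat \<Rightarrow> nat \<Rightarrow> nat" where
  "colour N q = (if 2 \<le> q \<and> q \<le> N + 1 then 1 else 2)"

definition counter_aut :: "nat \<Rightarrow> (nat, nat \<times> nat) pac" where
  "counter_aut N =
     \<lparr>states = {0..5 * N + 5}, alph = Sigma_I N \<times> Sigma_O N, init = 0,
      trans = delta N, col = colour N, incr = (\<lambda>_ _. True)\<rparr>"

lemma counter_aut_simps [simp]:
  "states (counter_aut N) = {0..5 * N + 5}" "alph (counter_aut N) = Sigma_I N \<times> Sigma_O N"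
  "init (counter_aut N) = 0" "trans (counter_aut N) = delta N" "col (counter_aut N) = colour N"
  "incr (counter_aut N) = (\<lambda>_ _. True)"
  by (simp_all add: counter_aut_def)

lemma reading_decode:
  fixes N i :: nat
  assumes "p < 2" "e < 2"
  defines "r \<equiv> reading N p i e - (N + 2)"
  shows "r div 4 = i" "r mod 2 = e" "r div 2 mod 2 = p"
  using assms unfolding reading_def by (auto simp: less_2_cases_iff) presburger+

lemma reading_gt: "N + 1 < reading N p i e"
  by (simp add: reading_def)

lemma colour_reading [simp]: "colour N (reading N p i e) = 2"
  using reading_gt[of N p i e] by (simp add: colour_def)

lemma delta_0: "delta N 0 (a, b) = advance N (b mod 2) a b"
  by (simp add: delta_def)

lemma delta_1: "delta N 1 ab = 1"
  by (simp add: delta_def split: prod.split)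

lemma delta_chain: "2 \<le> q \<Longrightarrow> q \<le> N \<Longrightarrow> delta N q ab = q + 1"
  by (simp add: delta_def split: prod.split)

lemma delta_chain_last: "0 < N \<Longrightarrow> delta N (N + 1) ab = 0"
  by (simp add: delta_def split: prod.split)

lemma delta_reading:
  assumes "p < 2" "e < 2"
  shows "delta N (reading N p i e) (a, b) = (if digit i (a div 2) \<noteq> e then 1 else advance N p a b)"
proof -
  have "N + 1 < reading N p i e" by (rule reading_gt)
  then show ?thesis using reading_decode[OF assms] by (simp add: delta_def Let_def)
qed

lemma wf_pac_counter_aut: "wf_pac (counter_aut N)"
proof -
  have "delta N q (a, b) \<le> 5 * N + 5" if "q \<le> 5 * N + 5" "b < 2 * N + 2" for q a b
  proof -
    have "b div 2 \<le> N" using \<open>b < 2 * N + 2\<close> by simp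
    then have "reading N p (b div 2) e \<le> 5 * N + 5" if "p < 2" "e < 2" for p e
      using that by (simp add: reading_def)
    then have "advance N p a b \<le> 5 * N + 5" if "p < 2" for p
      using that by (simp add: advance_def)
    then show ?thesis using \<open>q \<le> 5 * N + 5\<close> by (simp add: delta_def Let_def)
  qed
  then show ?thesis by (auto simp: wf_pac_def)
qed

lemma colours_counter_aut: "0 < N \<Longrightarrow> colour N ` {0..5 * N + 5} = {1, 2}"
proof
  assume "0 < N"
  then have "colour N 2 = 1" "colour N 0 = 2" by (simp_all add: colour_def)
  then show "{1, 2} \<subseteq> colour N ` {0..5 * N + 5}"
    using image_eqI[of 1 "colour N" 2] image_eqI[of 2 "colour N" 0] by simp
qed (auto simp: colour_def)

lemma finitary_buechi_counter_aut: "0 < N \<Longrightarrow> finitary_buechi (counter_aut N)"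
  using wf_pac_counter_aut colours_counter_aut by (simp add: finitary_buechi_def)

lemma card_states_counter_aut: "0 < N \<Longrightarrow> card (states (counter_aut N)) \<le> 11 * N"
  by simp

lemma run_counter_aut_chain:
  assumes "run (counter_aut N) w m = q" "2 \<le> q" "j \<le> N + 1 - q"
  shows "run (counter_aut N) w (m + j) = q + j"
  using assms(3)
proof (induction j)
  case (Suc j)
  then show ?case using assms(1,2) delta_chain[of "q + j" N] by simp
qed (use assms in simp)

lemma run_counter_aut_chain_exit:
  assumes "run (counter_aut N) w m = q" "2 \<le> q" "q \<le> N + 1"
  shows "run (counter_aut N) w (m + (N + 2 - q)) = 0"
proof -
  have "run (counter_aut N) w (m + (N + 1 - q)) = N + 1"
    using run_counter_aut_chain[OF assms(1,2), of "N + 1 - q"] assms(3) by simp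
  moreover have "m + (N + 2 - q) = Suc (m + (N + 1 - q))" "0 < N"
    using assms by auto
  ultimately show ?thesis using delta_chain_last by simp
qed

lemma seg_cost_counter_aut: "seg_cost (counter_aut N) w m m' = m' - m"
proof -
  have "{j. m \<le> j \<and> j < m'} = {m..<m'}" by auto
  then show ?thesis by (simp add: seg_cost_def)
qed

lemma Cor_counter_aut:
  assumes "0 < N"
  shows "Cor (counter_aut N) w m =
    (if colour N (run (counter_aut N) w m) = 2 then 0
     else INF m' \<in> {m'. m < m' \<and> colour N (run (counter_aut N) w m') = 2}. enat (m' - m))"
proof (cases "colour N (run (counter_aut N) w m) = 2")
  case False
  then have "colour N (run (counter_aut N) w m) = 1"
    by (simp add: colour_def split: if_splits)
  moreover have "Ans (counter_aut N) 1 = {2}"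
    using colours_counter_aut[OF assms] by (auto simp: Ans_def)
  ultimately show ?thesis
    by (simp add: Cor_def seg_cost_counter_aut)
qed (simp add: Cor_def)

lemma Cor_counter_aut_le:
  assumes "0 < N"
  shows "Cor (counter_aut N) w m \<le> enat N"
proof (cases "colour N (run (counter_aut N) w m) = 2")
  case False
  define q where "q = run (counter_aut N) w m"
  then have q: "2 \<le> q" "q \<le> N + 1"
    using False by (auto simp: colour_def split: if_splits)
  let ?m' = "m + (N + 2 - q)"
  have "?m' \<in> {m'. m < m' \<and> colour N (run (counter_aut N) w m') = 2}"
    using run_counter_aut_chain_exit[OF q_def[symmetric] q] q by (simp add: colour_def)
  from INF_lower[OF this, of "\<lambda>m'. enat (m' - m)"]
  have "Cor (counter_aut N) w m \<le> enat (?m' - m)"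
    using False by (simp only: Cor_counter_aut[OF assms] if_False)
  also have "\<dots> \<le> enat N"
    using q by simp
  finally show ?thesis .
qed (simp add: Cor_counter_aut[OF assms])

lemma Cor_counter_aut_chain_start:
  assumes "0 < N" and start: "run (counter_aut N) w m = 2"
  shows "enat N \<le> Cor (counter_aut N) w m"
proof -
  have "N \<le> m' - m" if "colour N (run (counter_aut N) w m') = 2" "m < m'" for m'
  proof (rule ccontr)
    assume "\<not> N \<le> m' - m"
    then have "run (counter_aut N) w (m + (m' - m)) = 2 + (m' - m)"
      using run_counter_aut_chain[OF start] by simp
    then show False using that \<open>\<not> N \<le> m' - m\<close> by (simp add: colour_def)
  qed
  moreover have "colour N 2 = 1"
    using assms(1) by (simp add: colour_def)
  ultimately show ?thesis
    using start by (auto simp: Cor_counter_aut[OF assms(1)] intro!: INF_greatest)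
qed

lemma limsup_Cor_counter_aut_le: "0 < N \<Longrightarrow> limsup (Cor (counter_aut N) w) \<le> enat N"
  by (rule Limsup_bounded) (simp add: Cor_counter_aut_le)

lemma counter_aut_strategy_winning:
  assumes "0 < N" "strategy (Sigma_I N) (Sigma_O N) \<tau>"
  shows "winning (Sigma_I N) (Sigma_O N) f (lang (counter_aut N)) \<tau>"
    and "strat_cost (counter_aut N) (Sigma_I N) f \<tau> \<le> enat N"
proof -
  have "limsup (Cor (counter_aut N) (outcome f \<tau> x)) \<le> enat N" for x
    using limsup_Cor_counter_aut_le[OF assms(1)] .
  then show "winning (Sigma_I N) (Sigma_O N) f (lang (counter_aut N)) \<tau>"
    and "strat_cost (counter_aut N) (Sigma_I N) f \<tau> \<le> enat N"
    using assms(2) outcome_in_alphabet[OF assms(2)] le_less_trans[of _ "enat N" \<infinity>]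
    by (auto simp: winning_def lang_def strat_cost_def intro!: SUP_least)
qed

section \<open>Lookahead \<open>2^N + 1\<close>: cost 0\<close>

definition lookahead_index :: "nat \<Rightarrow> nat list \<Rightarrow> nat" where
  "lookahead_index N u =
     (let j = length u - (2 ^ N + 1);
          differs = (\<lambda>i. digit i (u ! Suc j div 2) \<noteq> digit i (u ! j div 2 - 1))
      in if \<exists>i\<le>N. differs i then LEAST i. differs i else 0)"

definition lookahead_guess :: "nat \<Rightarrow> nat list \<Rightarrow> nat" where
  "lookahead_guess N u =
     (let j = length u - (2 ^ N + 1);
          zero = (\<lambda>t. j \<le> t \<and> t < length u \<and> u ! t div 2 = 0)
      in if \<exists>t. zero t then u ! (LEAST t. zero t) mod 2 else 0)"

definition lookahead :: "nat \<Rightarrow> nat list \<Rightarrow> nat" where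
  "lookahead N u = 2 * lookahead_index N u + lookahead_guess N u"

lemma lookahead_index_le: "lookahead_index N u \<le> N"
proof -
  have "(LEAST i. P i) \<le> N" if "\<exists>i\<le>N. P i" for P :: "nat \<Rightarrow> bool"
    using that by (meson Least_le le_trans)
  then show ?thesis by (simp add: lookahead_index_def Let_def)
qed

lemma lookahead_guess_le_1: "lookahead_guess N u \<le> 1"
  by (auto simp: lookahead_guess_def Let_def)

lemma lookahead_mod_2 [simp]: "lookahead N u mod 2 = lookahead_guess N u"
  and lookahead_div_2 [simp]: "lookahead N u div 2 = lookahead_index N u"
  using lookahead_guess_le_1[of N u] by (auto simp: lookahead_def)

lemma lookahead_strategy: "strategy SI (Sigma_O N) (lookahead N)"
proof -
  have "lookahead N u < 2 * N + 2" for u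
    using lookahead_index_le[of N u] lookahead_guess_le_1[of N u] by (simp add: lookahead_def)
  then show ?thesis by (simp add: strategy_def)
qed

definition lookahead_output :: "nat \<Rightarrow> (nat \<Rightarrow> nat) \<Rightarrow> nat \<Rightarrow> nat" where
  "lookahead_output N x j = lookahead N (map x [0..<2 ^ N + 1 + j])"

lemma outcome_lookahead: "outcome (f_k (2 ^ N)) (lookahead N) x j = (x j, lookahead_output N x j)"
  by (simp add: outcome_f_k lookahead_output_def)

lemma lookahead_guess_first_zero:
  assumes "j \<le> m" "m \<le> j + 2 ^ N" "x m div 2 = 0" "\<forall>t. j \<le> t \<and> t < m \<longrightarrow> x t div 2 \<noteq> 0"
  shows "lookahead_output N x j mod 2 = x m mod 2"
proof -
  define u where "u = map x [0..<2 ^ N + 1 + j]"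
  have len: "length u = 2 ^ N + 1 + j" and nth: "\<And>t. t < length u \<Longrightarrow> u ! t = x t"
    by (simp_all add: u_def del: upt_Suc)
  have j: "length u - (2 ^ N + 1) = j"
    by (simp add: len)
  have zero_iff: "(j \<le> t \<and> t < length u \<and> u ! t div 2 = 0) \<longleftrightarrow> (j \<le> t \<and> t \<le> j + 2 ^ N \<and> x t div 2 = 0)"
    for t using nth[of t] by (auto simp: len)
  have ex: "\<exists>t. j \<le> t \<and> t < length u \<and> u ! t div 2 = 0"
    unfolding zero_iff using assms by blast
  have least: "(LEAST t. j \<le> t \<and> t < length u \<and> u ! t div 2 = 0) = m"
    unfolding zero_iff using assms by (intro Least_equality) (auto simp: not_less[symmetric])
  have "lookahead_output N x j mod 2 = lookahead_guess N u"
    by (simp add: lookahead_output_def u_def)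
  also have "\<dots> = u ! m mod 2"
    unfolding lookahead_guess_def Let_def j if_P[OF ex] least ..
  also have "\<dots> = x m mod 2"
    using assms(2) by (simp add: nth len)
  finally show ?thesis .
qed

lemma lookahead_index_decrements:
  assumes "\<forall>t. x t \<in> Sigma_I N"
    and "digit (lookahead_output N x j div 2) (x (Suc j) div 2) =
         digit (lookahead_output N x j div 2) (x j div 2 - 1)"
  shows "x (Suc j) div 2 = x j div 2 - 1"
proof -
  define u where "u = map x [0..<2 ^ N + 1 + j]"
  have len: "length u = 2 ^ N + 1 + j" and nth: "\<And>t. t < length u \<Longrightarrow> u ! t = x t"
    by (simp_all add: u_def del: upt_Suc)
  have j: "length u - (2 ^ N + 1) = j"
    by (simp add: len)
  let ?differs = "\<lambda>i. digit i (x (Suc j) div 2) \<noteq> digit i (x j div 2 - 1)"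
  have index: "lookahead_index N u = (if \<exists>i\<le>N. ?differs i then LEAST i. ?differs i else 0)"
    using nth[of j] nth[of "Suc j"] unfolding lookahead_index_def Let_def j by (auto simp: len)
  have "\<not> (\<exists>i\<le>N. ?differs i)"
  proof
    assume ex: "\<exists>i\<le>N. ?differs i"
    then obtain i where "?differs i" by blast
    then have "?differs (LEAST i. ?differs i)" by (rule LeastI)
    then have "?differs (lookahead_index N u)"
      using ex index by simp
    with assms(2) show False
      by (simp add: u_def lookahead_output_def)
  qed
  moreover have "x t div 2 < 2 ^ Suc N" for t
  proof -
    have "x t div 2 \<le> 2 ^ N"
      using div_2_le_if_less[of "x t" "2 ^ N"] assms(1) by simp
    also have "\<dots> < 2 ^ Suc N" by simp
    finally show ?thesis .
  qed
  then have "x (Suc j) div 2 < 2 ^ Suc N" "x j div 2 - 1 < 2 ^ Suc N"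
    using le_less_trans[OF diff_le_self] by blast+
  ultimately show ?thesis
    using eq_if_digits_eq by blast
qed

definition counting_down :: "(nat \<Rightarrow> nat) \<Rightarrow> nat \<Rightarrow> nat \<Rightarrow> bool" where
  "counting_down x r m \<longleftrightarrow> (\<forall>t. r \<le> t \<and> t \<le> m \<longrightarrow> 0 < x t div 2 \<and> x t div 2 + (t - r) = x r div 2)"

context
  fixes N :: nat and x :: "nat \<Rightarrow> nat"
  assumes input: "\<forall>t. x t \<in> Sigma_I N"
begin

text \<open>Otherwise the simplifier unfolds runs letter by letter.\<close>
declare run.simps(2) [simp del]

abbreviation guess_at :: "nat \<Rightarrow> nat" where
  "guess_at j \<equiv> lookahead_output N x j mod 2"

abbreviation index_at :: "nat \<Rightarrow> nat" where
  "index_at j \<equiv> lookahead_output N x j div 2"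

abbreviation lookahead_run :: "nat \<Rightarrow> nat" where
  "lookahead_run \<equiv> run (counter_aut N) (outcome (f_k (2 ^ N)) (lookahead N) x)"

abbreviation reading_after :: "nat \<Rightarrow> nat \<Rightarrow> nat" where
  "reading_after r m \<equiv> reading N (guess_at r) (index_at m) (digit (index_at m) (x m div 2 - 1))"

abbreviation lookahead_invariant :: "nat \<Rightarrow> bool" where
  "lookahead_invariant m \<equiv> lookahead_run m \<in> {0, 1} \<or>
     (\<exists>r m'. m = Suc m' \<and> r \<le> m' \<and> lookahead_run m = reading_after r m' \<and> counting_down x r m')"

lemma lookahead_run_Suc:
  "lookahead_run (Suc m) = delta N (lookahead_run m) (x m, lookahead_output N x m)"
  by (simp add: outcome_lookahead run.simps(2))

lemma lookahead_invariant_from_0: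
  assumes "lookahead_run m = 0"
  shows "lookahead_invariant (Suc m)"
proof (cases "x m div 2 = 0")
  case True
  then have "guess_at m = x m mod 2"
    by (intro lookahead_guess_first_zero) auto
  then show ?thesis
    using assms True by (simp add: lookahead_run_Suc delta_0 advance_def)
next
  case False
  then have "lookahead_run (Suc m) = reading_after m m"
    using assms by (simp add: lookahead_run_Suc delta_0 advance_def)
  moreover have "counting_down x m m"
    using False by (auto simp: counting_down_def)
  ultimately show ?thesis by blast
qed

lemma lookahead_invariant_from_reading:
  assumes "r \<le> m" "lookahead_run (Suc m) = reading_after r m" "counting_down x r m"
  shows "lookahead_invariant (Suc (Suc m))"
proof -
  let ?e = "digit (index_at m) (x m div 2 - 1)"
  have step: "lookahead_run (Suc (Suc m)) =
      (if digit (index_at m) (x (Suc m) div 2) \<noteq> ?e then 1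
       else advance N (guess_at r) (x (Suc m)) (lookahead_output N x (Suc m)))"
    using assms(2) delta_reading by (simp add: lookahead_run_Suc)
  show ?thesis
  proof (cases "digit (index_at m) (x (Suc m) div 2) = ?e")
    case True
    then have "x (Suc m) div 2 = x m div 2 - 1"
      using lookahead_index_decrements[OF input] by simp
    then have count: "x (Suc m) div 2 + (Suc m - r) = x r div 2"
      using assms(1,3) by (auto simp: counting_down_def)
    show ?thesis
    proof (cases "x (Suc m) div 2 = 0")
      case zero: True
      have "x r div 2 \<le> 2 ^ N"
        using div_2_le_if_less[of "x r" "2 ^ N"] input by simp
      then have "guess_at r = x (Suc m) mod 2"
        using zero count assms(1,3) unfolding counting_down_def
        by (intro lookahead_guess_first_zero) (auto simp: less_Suc_eq_le)
      then show ?thesis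
        using step True zero by (simp add: advance_def)
    next
      case False
      then have "lookahead_run (Suc (Suc m)) = reading_after r (Suc m)" "counting_down x r (Suc m)"
        using step True count assms(1,3) by (auto simp: advance_def counting_down_def le_Suc_eq)
      then show ?thesis
        using assms(1) le_SucI by blast
    qed
  qed (use step in simp)
qed

lemma lookahead_invariant: "lookahead_invariant m"
proof (induction m)
  case (Suc m)
  consider "lookahead_run m = 0" | "lookahead_run m = 1"
    | r m' where "m = Suc m'" "r \<le> m'" "lookahead_run m = reading_after r m'" "counting_down x r m'"
    using Suc.IH by auto
  then show ?case
  proof cases
    case 1
    then show ?thesis by (rule lookahead_invariant_from_0)
  next
    case 2
    show ?thesis unfolding lookahead_run_Suc 2 delta_1 by simp
  next
    case 3
    then have "lookahead_invariant (Suc (Suc m'))"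
      using lookahead_invariant_from_reading by blast
    then show ?thesis unfolding \<open>m = Suc m'\<close> .
  qed
qed simp

lemma lookahead_run_colour: "colour N (lookahead_run m) = 2"
proof -
  from lookahead_invariant[of m] consider "lookahead_run m \<in> {0, 1}"
    | p i e where "lookahead_run m = reading N p i e"
    by blast
  then show ?thesis
  proof cases
    case 1
    then show ?thesis by (auto simp: colour_def)
  qed simp
qed

end

lemma strat_cost_lookahead_eq_0:
  assumes "0 < N"
  shows "strat_cost (counter_aut N) (Sigma_I N) (f_k (2 ^ N)) (lookahead N) = 0"
proof -
  have "limsup (Cor (counter_aut N) (outcome (f_k (2 ^ N)) (lookahead N) x)) = 0"
    if "\<forall>t. x t \<in> Sigma_I N" for x
  proof -
    have "Cor (counter_aut N) (outcome (f_k (2 ^ N)) (lookahead N) x) = (\<lambda>_. 0)"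
      using lookahead_run_colour[OF that] by (intro ext) (simp add: Cor_counter_aut[OF assms])
    then show ?thesis by (simp add: Limsup_const)
  qed
  then have "strat_cost (counter_aut N) (Sigma_I N) (f_k (2 ^ N)) (lookahead N) \<le> 0"
    unfolding strat_cost_def by (intro SUP_least) simp
  then show ?thesis by simp
qed

section \<open>Lookahead at most \<open>2^N\<close>: cost \<open>N\<close>\<close>

definition block_length :: "nat \<Rightarrow> nat" where
  "block_length N = 2 ^ N + N + 1"

lemma mod_block_length [simp]: "s \<le> 2 ^ N \<Longrightarrow> s mod block_length N = s"
  by (simp add: block_length_def)

text \<open>Player I's word consists of blocks: the counter runs from \<open>2^N\<close> down to 0, the letter with
counter 0 carries the complement of the guess Player O made at the start of the block (she made it
after seeing only \<open>k + 1 \<le> 2^N\<close> letters), and \<open>N\<close> further letters pad the penalty chain.\<close>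

definition spoiler_letter :: "nat \<Rightarrow> nat \<Rightarrow> (nat list \<Rightarrow> nat) \<Rightarrow> nat \<Rightarrow> nat list \<Rightarrow> nat" where
  "spoiler_letter N k \<tau> j u =
     (let s = j mod block_length N in
      if s < 2 ^ N then 2 * (2 ^ N - s)
      else if s = 2 ^ N then 1 - \<tau> (take (k + 1 + (j - 2 ^ N)) u) mod 2
      else 0)"

primrec spoiler_prefix :: "nat \<Rightarrow> nat \<Rightarrow> (nat list \<Rightarrow> nat) \<Rightarrow> nat \<Rightarrow> nat list" where
  "spoiler_prefix N k \<tau> 0 = []"
| "spoiler_prefix N k \<tau> (Suc j) =
     spoiler_prefix N k \<tau> j @ [spoiler_letter N k \<tau> j (spoiler_prefix N k \<tau> j)]"

definition spoiler :: "nat \<Rightarrow> nat \<Rightarrow> (nat list \<Rightarrow> nat) \<Rightarrow> nat \<Rightarrow> nat" where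
  "spoiler N k \<tau> j = spoiler_letter N k \<tau> j (spoiler_prefix N k \<tau> j)"

lemma spoiler_prefix_eq: "spoiler_prefix N k \<tau> j = map (spoiler N k \<tau>) [0..<j]"
  by (induction j) (simp_all add: spoiler_def)

lemma spoiler_counter:
  "spoiler N k \<tau> j div 2 = (if j mod block_length N \<le> 2 ^ N then 2 ^ N - j mod block_length N else 0)"
  by (simp add: spoiler_def spoiler_letter_def Let_def)

lemma spoiler_in_Sigma_I: "spoiler N k \<tau> j \<in> Sigma_I N"
proof -
  have "spoiler N k \<tau> j div 2 \<le> 2 ^ N"
    by (simp add: spoiler_counter)
  then show ?thesis by simp
qed

lemma spoiler_bit:
  assumes "k < 2 ^ N" "j mod block_length N = 2 ^ N"
  shows "spoiler N k \<tau> j mod 2 = 1 - \<tau> (map (spoiler N k \<tau>) [0..<k + 1 + (j - 2 ^ N)]) mod 2"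
proof -
  have "2 ^ N \<le> j"
    using assms(2) by (metis mod_less_eq_dividend)
  then have "take (k + 1 + (j - 2 ^ N)) (spoiler_prefix N k \<tau> j) = map (spoiler N k \<tau>) [0..<k + 1 + (j - 2 ^ N)]"
    using assms(1) by (simp add: spoiler_prefix_eq take_map del: upt_Suc)
  then show ?thesis
    using assms(2) by (simp add: spoiler_def spoiler_letter_def del: upt_Suc)
qed

context
  fixes N k :: nat and \<tau> :: "nat list \<Rightarrow> nat"
  assumes N: "0 < N" and k: "k < 2 ^ N"
begin

declare run.simps(2) [simp del] upt_Suc [simp del]

abbreviation spoiler_run :: "nat \<Rightarrow> nat" where
  "spoiler_run \<equiv> run (counter_aut N) (outcome (f_k k) \<tau> (spoiler N k \<tau>))"

abbreviation response :: "nat \<Rightarrow> nat" where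
  "response j \<equiv> \<tau> (map (spoiler N k \<tau>) [0..<k + 1 + j])"

lemma spoiler_run_Suc: "spoiler_run (Suc j) = delta N (spoiler_run j) (spoiler N k \<tau> j, response j)"
  by (simp add: outcome_f_k run.simps(2))

lemma spoiler_run_countdown:
  assumes start: "spoiler_run (b * block_length N) = 0" and "s < 2 ^ N"
  defines "r \<equiv> b * block_length N"
  shows "spoiler_run (Suc (r + s)) =
    reading N (response r mod 2) (response (r + s) div 2) (digit (response (r + s) div 2) (2 ^ N - Suc s))"
  using \<open>s < 2 ^ N\<close>
proof (induction s)
  case 0
  have "spoiler N k \<tau> r div 2 = 2 ^ N"
    by (simp add: r_def spoiler_counter)
  then show ?case
    using start by (simp add: r_def spoiler_run_Suc delta_0 advance_def)
next
  case (Suc s)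
  have "spoiler N k \<tau> (Suc (r + s)) div 2 = 2 ^ N - Suc s"
    using Suc.prems by (simp add: r_def spoiler_counter)
  moreover have "2 ^ N - Suc s \<noteq> 0"
    using Suc.prems by simp
  ultimately show ?case
    using Suc by (simp add: spoiler_run_Suc[of "Suc (r + s)"] delta_reading advance_def)
qed

lemma spoiler_run_block:
  assumes start: "spoiler_run (b * block_length N) = 0"
  defines "r \<equiv> b * block_length N"
  shows "spoiler_run (r + Suc (2 ^ N)) = 2" and "spoiler_run (r + block_length N) = 0"
proof -
  let ?p = "response r mod 2" and ?i = "response (r + (2 ^ N - 1)) div 2"
  have "spoiler_run (r + 2 ^ N) = reading N ?p ?i 0"
    using spoiler_run_countdown[OF start, of "2 ^ N - 1"] by (simp add: r_def digit_def)
  moreover have "(r + 2 ^ N) mod block_length N = 2 ^ N"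
    by (simp add: r_def)
  then have "spoiler N k \<tau> (r + 2 ^ N) div 2 = 0" "spoiler N k \<tau> (r + 2 ^ N) mod 2 \<noteq> ?p"
    using spoiler_bit[OF k] one_minus_mod_2_neq by (simp_all add: spoiler_counter)
  ultimately show chain: "spoiler_run (r + Suc (2 ^ N)) = 2"
    by (simp add: spoiler_run_Suc[of "r + 2 ^ N"] delta_reading advance_def digit_def)
  have "2 \<le> N + 1"
    using N by simp
  from run_counter_aut_chain_exit[OF chain order.refl this]
  have "spoiler_run (r + Suc (2 ^ N) + (N + 2 - 2)) = 0" .
  moreover have "r + Suc (2 ^ N) + (N + 2 - 2) = r + block_length N"
    by (simp add: block_length_def)
  ultimately show "spoiler_run (r + block_length N) = 0"
    by (simp only:)
qed

lemma spoiler_run_block_start: "spoiler_run (b * block_length N) = 0"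
proof (induction b)
  case (Suc b)
  then show ?case
    using spoiler_run_block(2)[OF Suc] by (simp add: add.commute)
qed simp

lemma limsup_Cor_spoiler: "enat N \<le> limsup (Cor (counter_aut N) (outcome (f_k k) \<tau> (spoiler N k \<tau>)))"
proof (rule le_limsup_if_frequently)
  have "enat N \<le> Cor (counter_aut N) (outcome (f_k k) \<tau> (spoiler N k \<tau>)) (b * block_length N + Suc (2 ^ N))"
    for b using Cor_counter_aut_chain_start[OF N spoiler_run_block(1)[OF spoiler_run_block_start]] .
  moreover have "b \<le> b * block_length N + Suc (2 ^ N)" for b :: nat
    by (simp add: block_length_def trans_le_add1)
  ultimately show "\<exists>\<^sub>F m in sequentially. enat N \<le> Cor (counter_aut N) (outcome (f_k k) \<tau> (spoiler N k \<tau>)) m"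
    unfolding frequently_sequentially by blast
qed

lemma strat_cost_short_delay_ge: "enat N \<le> strat_cost (counter_aut N) (Sigma_I N) (f_k k) \<tau>"
proof -
  have "spoiler N k \<tau> \<in> {x. \<forall>i. x i \<in> Sigma_I N}"
    using spoiler_in_Sigma_I by blast
  then show ?thesis
    unfolding strat_cost_def using limsup_Cor_spoiler
    by (rule SUP_upper2[where f = "\<lambda>x. limsup (Cor (counter_aut N) (outcome (f_k k) \<tau> x))"])
qed

end

lemma counter_aut_O_wins: "0 < N \<Longrightarrow> O_wins (Sigma_I N) (Sigma_O N) f (lang (counter_aut N))"
  using counter_aut_strategy_winning(1)[OF _ lookahead_strategy] by (auto simp: O_wins_def)

lemma lookahead_optimal: "0 < N \<Longrightarrow> optimal (counter_aut N) (Sigma_I N) (Sigma_O N) (f_k (2 ^ N)) (lookahead N)"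
  using counter_aut_strategy_winning(1)[OF _ lookahead_strategy] strat_cost_lookahead_eq_0
  by (simp add: optimal_def)

lemma strategy_optimal_if_short_delay:
  assumes "0 < N" "k < 2 ^ N" "strategy (Sigma_I N) (Sigma_O N) \<tau>"
  shows "optimal (counter_aut N) (Sigma_I N) (Sigma_O N) (f_k k) \<tau>"
    and "strat_cost (counter_aut N) (Sigma_I N) (f_k k) \<tau> = enat N"
proof -
  show cost: "strat_cost (counter_aut N) (Sigma_I N) (f_k k) \<tau> = enat N"
    using counter_aut_strategy_winning(2)[OF assms(1,3)] strat_cost_short_delay_ge[OF assms(1,2)]
    by (rule antisym)
  show "optimal (counter_aut N) (Sigma_I N) (Sigma_O N) (f_k k) \<tau>"
    using counter_aut_strategy_winning(1)[OF assms(1,3)] strat_cost_short_delay_ge[OF assms(1,2)]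
    unfolding optimal_def cost by blast
qed

theorem theorem6:
  "\<exists>C::nat. \<forall>n::nat. n > 0 \<longrightarrow>
     (\<exists>(SI::nat set) (SO::nat set) (A::(nat, nat \<times> nat) pac).
        finite SI \<and> finite SO \<and> SI \<noteq> {} \<and> SO \<noteq> {} \<and>
        finitary_buechi A \<and> alph A = SI \<times> SO \<and> card (states A) \<le> C * n \<and>
        (\<forall>f. delay_fun f \<longrightarrow> O_wins SI SO f (lang A)) \<and>
        (\<exists>\<tau>. optimal A SI SO (f_k (2 ^ n)) \<tau> \<and> strat_cost A SI (f_k (2 ^ n)) \<tau> = 0) \<and>
        (\<forall>k < 2 ^ n. \<exists>\<tau>. optimal A SI SO (f_k k) \<tau> \<and> strat_cost A SI (f_k k) \<tau> = enat n))"
proof (intro exI[of _ 11] allI impI)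
  fix n :: nat
  assume n: "0 < n"
  have "strategy (Sigma_I n) (Sigma_O n) (\<lambda>_. 0)"
    by (simp add: strategy_def)
  then have "\<forall>k < 2 ^ n. \<exists>\<tau>. optimal (counter_aut n) (Sigma_I n) (Sigma_O n) (f_k k) \<tau> \<and>
      strat_cost (counter_aut n) (Sigma_I n) (f_k k) \<tau> = enat n"
    using strategy_optimal_if_short_delay[OF n] by blast
  moreover have "\<exists>\<tau>. optimal (counter_aut n) (Sigma_I n) (Sigma_O n) (f_k (2 ^ n)) \<tau> \<and>
      strat_cost (counter_aut n) (Sigma_I n) (f_k (2 ^ n)) \<tau> = 0"
    using lookahead_optimal[OF n] strat_cost_lookahead_eq_0[OF n] by blast
  moreover have "finite (Sigma_I n) \<and> finite (Sigma_O n) \<and> Sigma_I n \<noteq> {} \<and> Sigma_O n \<noteq> {} \<and>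
      alph (counter_aut n) = Sigma_I n \<times> Sigma_O n"
    by auto
  ultimately show "\<exists>(SI::nat set) (SO::nat set) (A::(nat, nat \<times> nat) pac).
        finite SI \<and> finite SO \<and> SI \<noteq> {} \<and> SO \<noteq> {} \<and>
        finitary_buechi A \<and> alph A = SI \<times> SO \<and> card (states A) \<le> 11 * n \<and>
        (\<forall>f. delay_fun f \<longrightarrow> O_wins SI SO f (lang A)) \<and>
        (\<exists>\<tau>. optimal A SI SO (f_k (2 ^ n)) \<tau> \<and> strat_cost A SI (f_k (2 ^ n)) \<tau> = 0) \<and>
        (\<forall>k < 2 ^ n. \<exists>\<tau>. optimal A SI SO (f_k k) \<tau> \<and> strat_cost A SI (f_k k) \<tau> = enat n)"
    using finitary_buechi_counter_aut[OF n] card_states_counter_aut[OF n] counter_aut_O_wins[OF n]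
    by blast
qed

end
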